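(* Let $G$ be a $\sigma$-compact locally compact Abelian group and $\omega=\sum_{x\in\Gamma}\omega(x)\delta_x$ a translation bounded discrete measure on $G$. (i) If $\omega$ is norm-almost periodic, then $\omega$ is sup-almost periodic. (ii) If $\Gamma$ is weakly uniformly discrete, then $\omega$ is norm-almost periodic if and only if $\omega$ is sup-almost periodic.
   Context: Fix a compact $K\subset G$ with nonempty interior. For a translation bounded measure $\mu$, $\|\mu\|_K:=\sup_{t\in G}|\mu|(t+K)$, and $T_t\mu$ denotes the translate $T_t\mu(A)=\mu(A-t)$. $\omega$ is norm-almost periodic if for every $\varepsilon>0$ the set $P^K_\varepsilon(\omega):=\{t\in G:\|\omega-T_t\omega\|_K<\varepsilon\}$ is relatively dense. A discrete measure $\omega$ is sup-almost periodic if for every $\varepsilon>0$ the set $P^\infty_\varepsilon(\omega):=\{t\in G:\sup_{x\in G}|\omega(\{t+x\})-\omega(\{x\})|<\varepsilon\}$ is relatively dense. A set $\Gamma$ is weakly uniformly discrete if $\sup_{x\in G}\#(\Gamma\cap(x+K))<\infty$ for every compact $K$. Relatively dense: $A+K'=G$ for some compact $K'$. *)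

theory Defs
  imports "HOL-Analysis.Analysis"
begin

text \<open>A discrete measure on G is represented by its weight function
  w :: 'a => complex, i.e. omega = sum over x of w x times delta_x.\<close>

definition sigma_compact_group :: "'a::topological_space itself \<Rightarrow> bool" where
  "sigma_compact_group _ \<longleftrightarrow>
     (\<exists>F :: 'a set set. countable F \<and> (\<forall>C\<in>F. compact C) \<and> \<Union>F = UNIV)"

definition tvar :: "('a \<Rightarrow> complex) \<Rightarrow> 'a set \<Rightarrow> ennreal" where
  "tvar w A = (\<integral>\<^sup>+ x. ennreal (norm (w x)) \<partial>count_space A)"

definition Knorm :: "'a::ab_group_add set \<Rightarrow> ('a \<Rightarrow> complex) \<Rightarrow> ennreal" where
  "Knorm K w = (SUP t. tvar w ((\<lambda>k. t + k) ` K))"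

definition translation_bounded :: "('a::{ab_group_add,topological_space} \<Rightarrow> complex) \<Rightarrow> bool" where
  "translation_bounded w \<longleftrightarrow> (\<forall>K. compact K \<longrightarrow> Knorm K w < \<infinity>)"

text \<open>Weights of the translate T_t omega, where T_t mu (A) = mu (A - t).\<close>
definition transl :: "'a::ab_group_add \<Rightarrow> ('a \<Rightarrow> complex) \<Rightarrow> ('a \<Rightarrow> complex)" where
  "transl t w = (\<lambda>y. w (y - t))"

definition rel_dense :: "'a::{ab_group_add,topological_space} set \<Rightarrow> bool" where
  "rel_dense A \<longleftrightarrow> (\<exists>K'. compact K' \<and> {a + k | a k. a \<in> A \<and> k \<in> K'} = UNIV)"

definition PK :: "'a::ab_group_add set \<Rightarrow> real \<Rightarrow> ('a \<Rightarrow> complex) \<Rightarrow> 'a set" where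
  "PK K \<epsilon> w = {t. Knorm K (\<lambda>y. w y - transl t w y) < ennreal \<epsilon>}"

definition norm_almost_periodic :: "'a::{ab_group_add,topological_space} set \<Rightarrow> ('a \<Rightarrow> complex) \<Rightarrow> bool" where
  "norm_almost_periodic K w \<longleftrightarrow> (\<forall>\<epsilon>>0. rel_dense (PK K \<epsilon> w))"

definition Pinf :: "real \<Rightarrow> ('a::ab_group_add \<Rightarrow> complex) \<Rightarrow> 'a set" where
  "Pinf \<epsilon> w = {t. (SUP x. ennreal (norm (w (t + x) - w x))) < ennreal \<epsilon>}"

definition sup_almost_periodic :: "('a::{ab_group_add,topological_space} \<Rightarrow> complex) \<Rightarrow> bool" where
  "sup_almost_periodic w \<longleftrightarrow> (\<forall>\<epsilon>>0. rel_dense (Pinf \<epsilon> w))"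

definition weakly_uniformly_discrete :: "'a::{ab_group_add,topological_space} set \<Rightarrow> bool" where
  "weakly_uniformly_discrete \<Gamma> \<longleftrightarrow>
     (\<forall>K. compact K \<longrightarrow> (\<exists>N::nat. \<forall>x. finite (\<Gamma> \<inter> (\<lambda>k. x + k) ` K)
                                         \<and> card (\<Gamma> \<inter> (\<lambda>k. x + k) ` K) \<le> N))"

end

theory Submission
  imports Defs
begin

text \<open>Since \<open>K \<noteq> {}\<close>, every point lies in some translate of \<open>K\<close>, so the \<open>K\<close>-norm of
  \<open>\<omega> - T\<^sub>t \<omega>\<close> dominates each of its point masses; hence \<open>P\<^sup>K\<^sub>\<epsilon> \<subseteq> P\<^sup>\<infinity>\<^sub>\<epsilon>\<close>. Conversely, if
  every translate of \<open>K\<close> meets \<open>\<Gamma>\<close> in at most \<open>N\<close> points, then \<open>\<omega> - T\<^sub>t \<omega>\<close> has at most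
  \<open>2N\<close> atoms in each translate of \<open>K\<close>, so \<open>P\<^sup>\<infinity>\<^sub>\<delta> \<subseteq> P\<^sup>K\<^sub>\<epsilon>\<close> for \<open>\<delta> = \<epsilon> / (2N + 2)\<close>.
  Relative denseness passes to supersets.\<close>

lemma norm_le_tvar:
  assumes "y \<in> A"
  shows "ennreal (norm (w y)) \<le> tvar w A"
proof -
  have "ennreal (norm (w y)) = (\<integral>\<^sup>+x. ennreal (norm (w x)) \<partial>count_space {y})"
    by (simp add: nn_integral_count_space_finite)
  also have "\<dots> = (\<integral>\<^sup>+x. ennreal (norm (w x)) * indicator {y} x \<partial>count_space UNIV)"
    by (rule nn_integral_count_space_indicator) simp
  also have "\<dots> \<le> (\<integral>\<^sup>+x. ennreal (norm (w x)) * indicator A x \<partial>count_space UNIV)"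
    using assms by (intro nn_integral_mono) (auto split: split_indicator)
  also have "\<dots> = tvar w A"
    unfolding tvar_def by (cases "A = UNIV") (simp_all add: nn_integral_count_space_indicator)
  finally show ?thesis .
qed

lemma tvar_le_card_mult:
  assumes "finite B" "\<And>x. x \<in> A - B \<Longrightarrow> w x = 0" "\<And>x. x \<in> A \<Longrightarrow> ennreal (norm (w x)) \<le> S"
  shows "tvar w A \<le> of_nat (card (A \<inter> B)) * S"
proof -
  have "tvar w A = (\<integral>\<^sup>+x. ennreal (norm (w x)) \<partial>count_space (A \<inter> B))"
    unfolding tvar_def using assms(2) by (intro nn_integral_count_space_eq) auto
  also have "\<dots> = (\<Sum>x\<in>A \<inter> B. ennreal (norm (w x)))"
    using assms(1) by (simp add: nn_integral_count_space_finite)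
  also have "\<dots> \<le> (\<Sum>x\<in>A \<inter> B. S)"
    using assms(3) by (intro sum_mono) auto
  finally show ?thesis by simp
qed

lemma rel_dense_mono:
  assumes "A \<subseteq> B" "rel_dense A"
  shows "rel_dense B"
proof -
  obtain K' where K': "compact K'" "{a + k | a k. a \<in> A \<and> k \<in> K'} = UNIV"
    using assms(2) unfolding rel_dense_def by blast
  have "{a + k | a k. a \<in> A \<and> k \<in> K'} \<subseteq> {a + k | a k. a \<in> B \<and> k \<in> K'}"
    using assms(1) by blast
  with K' show ?thesis unfolding rel_dense_def by auto
qed

lemma norm_le_Knorm:
  assumes "K \<noteq> {}"
  shows "ennreal (norm (v y)) \<le> Knorm K v"
proof -
  obtain k where "k \<in> K" using assms by blast
  then have "y \<in> (\<lambda>k'. (y - k) + k') ` K" by force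
  then have "ennreal (norm (v y)) \<le> tvar v ((\<lambda>k'. (y - k) + k') ` K)" by (rule norm_le_tvar)
  also have "\<dots> \<le> Knorm K v" unfolding Knorm_def by (rule SUP_upper) simp
  finally show ?thesis .
qed

lemma PK_subset_Pinf:
  assumes "K \<noteq> {}"
  shows "PK K \<epsilon> w \<subseteq> Pinf \<epsilon> w"
proof
  fix t assume t: "t \<in> PK K \<epsilon> w"
  have "(SUP x. ennreal (norm (w (t + x) - w x))) \<le> Knorm K (\<lambda>y. w y - transl t w y)"
    using norm_le_Knorm[OF assms, of "\<lambda>y. w y - transl t w y" "t + _"]
    by (intro SUP_least) (simp add: transl_def)
  also have "\<dots> < ennreal \<epsilon>" using t unfolding PK_def by simp
  finally show "t \<in> Pinf \<epsilon> w" unfolding Pinf_def by simp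
qed

lemma Knorm_diff_transl_le:
  assumes N: "\<And>x. finite (\<Gamma> \<inter> (\<lambda>k. x + k) ` K) \<and> card (\<Gamma> \<inter> (\<lambda>k. x + k) ` K) \<le> N"
    and supp: "\<forall>x. x \<notin> \<Gamma> \<longrightarrow> w x = 0"
  shows "Knorm K (\<lambda>y. w y - transl t w y) \<le> of_nat (2 * N) * (SUP x. ennreal (norm (w (t + x) - w x)))"
    (is "Knorm K ?v \<le> _ * ?S")
  unfolding Knorm_def
proof (rule SUP_least)
  fix s
  let ?A = "(\<lambda>k. s + k) ` K"
  let ?B = "(\<Gamma> \<inter> ?A) \<union> (\<lambda>g. g + t) ` (\<Gamma> \<inter> (\<lambda>k. (s - t) + k) ` K)"
  have fin: "finite ?B" using N by auto
  have "tvar ?v ?A \<le> of_nat (card (?A \<inter> ?B)) * ?S"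
  proof (rule tvar_le_card_mult[OF fin])
    fix x assume x: "x \<in> ?A - ?B"
    then obtain k where "k \<in> K" "x = s + k" by auto
    then have "x - t \<in> (\<lambda>k. (s - t) + k) ` K" by (auto simp: algebra_simps)
    with x have "x - t \<notin> \<Gamma>" by (metis (no_types, lifting) DiffD2 IntI UnI2 diff_add_cancel image_eqI)
    with x supp show "?v x = 0" by (auto simp: transl_def)
  next
    fix x
    have "ennreal (norm (?v x)) = ennreal (norm (w (t + (x - t)) - w (x - t)))"
      by (simp add: transl_def)
    also have "\<dots> \<le> ?S" by (rule SUP_upper) simp
    finally show "ennreal (norm (?v x)) \<le> ?S" .
  qed
  also have "card (?A \<inter> ?B) \<le> 2 * N"
  proof -
    have "card (?A \<inter> ?B) \<le> card ?B" using fin by (intro card_mono) auto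
    also have "\<dots> \<le> card (\<Gamma> \<inter> ?A) + card (\<Gamma> \<inter> (\<lambda>k. (s - t) + k) ` K)"
      by (rule order_trans[OF card_Un_le add_left_mono[OF card_image_le]]) (use N in auto)
    also have "\<dots> \<le> 2 * N" using N[of s] N[of "s - t"] by linarith
    finally show ?thesis .
  qed
  then have "of_nat (card (?A \<inter> ?B)) * ?S \<le> of_nat (2 * N) * ?S"
    by (intro mult_right_mono of_nat_mono) simp_all
  finally show "tvar ?v ?A \<le> of_nat (2 * N) * ?S" .
qed

lemma Pinf_subset_PK:
  assumes N: "\<And>x. finite (\<Gamma> \<inter> (\<lambda>k. x + k) ` K) \<and> card (\<Gamma> \<inter> (\<lambda>k. x + k) ` K) \<le> N"
    and supp: "\<forall>x. x \<notin> \<Gamma> \<longrightarrow> w x = 0"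
    and "\<epsilon> > 0"
  shows "Pinf (\<epsilon> / (2 * (real N + 1))) w \<subseteq> PK K \<epsilon> w"
proof
  fix t
  define \<delta> where "\<delta> = \<epsilon> / (2 * (real N + 1))"
  assume "t \<in> Pinf \<delta> w"
  then have S: "(SUP x. ennreal (norm (w (t + x) - w x))) < ennreal \<delta>"
    unfolding Pinf_def by simp
  have "\<delta> > 0" using \<open>\<epsilon> > 0\<close> by (simp add: \<delta>_def)
  have "Knorm K (\<lambda>y. w y - transl t w y) \<le> ennreal (2 * real N) * (SUP x. ennreal (norm (w (t + x) - w x)))"
    using Knorm_diff_transl_le[OF N supp] by (simp add: ennreal_of_nat_eq_real_of_nat)
  also have "\<dots> \<le> ennreal (2 * real N) * ennreal \<delta>"
    using S by (intro mult_left_mono) auto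
  also have "\<dots> = ennreal (2 * real N * \<delta>)"
    using \<open>\<delta> > 0\<close> by (simp add: ennreal_mult)
  also have "\<dots> < ennreal \<epsilon>"
    using \<open>\<delta> > 0\<close> \<open>\<epsilon> > 0\<close> by (intro ennreal_lessI) (simp_all add: \<delta>_def field_simps)
  finally show "t \<in> PK K \<epsilon> w" unfolding PK_def by simp
qed

theorem lemma3p4:
  fixes K :: "'a::{topological_ab_group_add, t2_space} set"
    and w :: "'a \<Rightarrow> complex" and \<Gamma> :: "'a set"
  assumes lc: "locally_compact_space (euclidean :: 'a topology)"
    and sc: "sigma_compact_group TYPE('a)"
    and K: "compact K" "interior K \<noteq> {}"
    and supp: "\<forall>x. x \<notin> \<Gamma> \<longrightarrow> w x = 0"
    and tb: "translation_bounded w"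
  shows "(norm_almost_periodic K w \<longrightarrow> sup_almost_periodic w)
       \<and> (weakly_uniformly_discrete \<Gamma> \<longrightarrow>
            (norm_almost_periodic K w \<longleftrightarrow> sup_almost_periodic w))"
proof -
  have "K \<noteq> {}" using K(2) by auto
  have norm_imp_sup: "sup_almost_periodic w" if nap: "norm_almost_periodic K w"
    unfolding sup_almost_periodic_def
  proof (intro allI impI)
    fix \<epsilon> :: real assume "\<epsilon> > 0"
    then have "rel_dense (PK K \<epsilon> w)"
      using nap unfolding norm_almost_periodic_def by simp
    then show "rel_dense (Pinf \<epsilon> w)"
      by (rule rel_dense_mono[OF PK_subset_Pinf[OF \<open>K \<noteq> {}\<close>]])
  qed
  have sup_imp_norm: "norm_almost_periodic K w"
    if wud: "weakly_uniformly_discrete \<Gamma>" and sap: "sup_almost_periodic w"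
  proof -
    obtain N :: nat where N: "\<And>x. finite (\<Gamma> \<inter> (\<lambda>k. x + k) ` K) \<and> card (\<Gamma> \<inter> (\<lambda>k. x + k) ` K) \<le> N"
      using wud K(1) unfolding weakly_uniformly_discrete_def by blast
    show ?thesis
      unfolding norm_almost_periodic_def
    proof (intro allI impI)
      fix \<epsilon> :: real assume "\<epsilon> > 0"
      then have "rel_dense (Pinf (\<epsilon> / (2 * (real N + 1))) w)"
        using sap unfolding sup_almost_periodic_def by simp
      then show "rel_dense (PK K \<epsilon> w)"
        by (rule rel_dense_mono[OF Pinf_subset_PK[OF N supp \<open>\<epsilon> > 0\<close>]])
    qed
  qed
  show ?thesis using norm_imp_sup sup_imp_norm by blast
qed

end
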